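(* Let $a_{i,j}=\ell_{i,j}+f_{i,j}(\ell_{i,j}^* )$, $(i,j)\in J$, be strongly matricially free Toeplitz operators on $\mathcal{N}$, let $A=\sum_{(i,j)\in J}a_{i,j}$, $L=\sum_{(i,j)\in J}\ell_{i,j}$ and $\rho(z)=(1-zL)^{-1}\Omega$. Then for $0<|z|<\big(\sum_{(i,j)\in J}|\alpha_{i,j}|^2\big)^{-1}$, $$A\rho(z)=\frac1z(\rho(z)-\Omega)+\sum_{(i,j)\in J}f_{i,j}(\alpha_{i,j}^2z)1_{i,j}\rho(z),$$ where $f_{i,j}(\alpha_{i,j}^2z)$ denotes the scalar polynomial evaluated at $\alpha_{i,j}^2z$.
   Context: Fock space. Let $J\subseteq\{1,2\}\times\{1,2\}$, $(\alpha_{i,j})_{(i,j)\in J}$ positive reals, $\{e_{i,j}:(i,j)\in J\}$ orthonormal vectors and $\mathcal{F}$ the full Fock space over $\bigoplus_{(i,j)\in J}\mathbb{C}e_{i,j}$ with vacuum $\Omega$. The strongly matricially free Fock space $\mathcal{N}\subseteq\mathcal{F}$ is the closed span of $\Omega$ and all simple tensors $e_{i_1,i_2}^{\otimes n_1}\otimes e_{i_2,i_3}^{\otimes n_2}\otimes\dots\otimes e_{i_{m-1},i_m}^{\otimes n_{m-1}}\otimes e_{i_m,i_m}^{\otimes n_m}$ ($m\ge1$, $n_k\ge1$, $i_1\neq\dots\neq i_m$, all pairs in $J$). With $P$ the projection onto $\mathcal{N}$ and $\ell(e)w=e\otimes w$, the strongly matricially free creation operators are $\ell_{i,j}=\alpha_{i,j}P\ell(e_{i,j})|_{\mathcal{N}}$.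 Let $\mathcal{N}_{i,j}$ be the closed span of those simple tensors whose first factor is $e_{i,j}$; the internal unit $1_{j,j}$ is the projection onto $\mathbb{C}\Omega\oplus\mathcal{N}_{j,j}$ and, for $i\neq j$, $1_{i,j}$ is the projection onto $\mathcal{N}\ominus(\mathbb{C}\Omega\oplus\mathcal{N}_{i,i})$. For polynomials $f_{i,j}(w)=\sum_{n=0}^{d}c_{i,j}(n)w^n$ with complex coefficients, the strongly matricially free Toeplitz operators are $a_{i,j}=\ell_{i,j}+f_{i,j}(\ell_{i,j}^* )$, where $f_{i,j}(\ell_{i,j}^* ):=c_{i,j}(0)1_{i,j}+\sum_{n\ge1}c_{i,j}(n)(\ell_{i,j}^* )^n$. *)

theory Defs
  imports Complex_Main "HOL-Computational_Algebra.Polynomial"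
begin

text \<open>Basis words: a simple tensor e_{p_1} (x) ... (x) e_{p_n} is the list [p_1,...,p_n]
  (first tensor factor = head); the vacuum Omega is the empty word.\<close>

type_synonym word = "(nat \<times> nat) list"
type_synonym vec = "word \<Rightarrow> complex"

text \<open>The words spanning the strongly matricially free Fock space N:
  the empty word (Omega) and the words
  e_{i1,i2}^{n1} e_{i2,i3}^{n2} ... e_{i(m-1),im}^{n(m-1)} e_{im,im}^{nm}
  with m >= 1, all n_k >= 1, consecutive indices distinct, all pairs in J
  (indices of the blocks counted from 0 here).\<close>
definition smf_word :: "(nat \<times> nat) set \<Rightarrow> word \<Rightarrow> bool" where
  "smf_word J w \<longleftrightarrow> w = [] \<or>
     (\<exists>m is ns. m \<ge> 1 \<and> length is = m \<and> length ns = m \<and>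
        (\<forall>k<m. ns ! k \<ge> 1) \<and>
        (\<forall>k. Suc k < m \<longrightarrow> is ! k \<noteq> is ! Suc k) \<and>
        (\<forall>k. Suc k < m \<longrightarrow> (is ! k, is ! Suc k) \<in> J) \<and>
        (is ! (m - 1), is ! (m - 1)) \<in> J \<and>
        w = concat (map (\<lambda>k. replicate (ns ! k)
              (if Suc k < m then (is ! k, is ! Suc k) else (is ! k, is ! k))) [0..<m]))"

definition vacuum :: vec where
  "vacuum = (\<lambda>w. if w = [] then 1 else 0)"

definition smf_creation :: "(nat \<times> nat) set \<Rightarrow> (nat \<times> nat \<Rightarrow> real) \<Rightarrow> nat \<times> nat \<Rightarrow> vec \<Rightarrow> vec" where
  "smf_creation J \<alpha> p v = (\<lambda>u. if u \<noteq> [] \<and> hd u = p \<and> smf_word J u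
       then complex_of_real (\<alpha> p) * v (tl u) else 0)"

definition smf_annihilation :: "(nat \<times> nat) set \<Rightarrow> (nat \<times> nat \<Rightarrow> real) \<Rightarrow> nat \<times> nat \<Rightarrow> vec \<Rightarrow> vec" where
  "smf_annihilation J \<alpha> p v = (\<lambda>w. if smf_word J w \<and> smf_word J (p # w)
       then complex_of_real (\<alpha> p) * v (p # w) else 0)"

text \<open>internal units 1_{i,j}: orthogonal projections (onto COmega + N_{jj} for diagonal
  pairs, onto N minus (COmega + N_{ii}) for i <> j)\<close>
definition smf_unit :: "(nat \<times> nat) set \<Rightarrow> nat \<times> nat \<Rightarrow> vec \<Rightarrow> vec" where
  "smf_unit J p v = (\<lambda>w.
     if smf_word J w \<and>
        (if fst p = snd p then (w = [] \<or> hd w = p)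
         else (w \<noteq> [] \<and> hd w \<noteq> (fst p, fst p)))
     then v w else 0)"

text \<open>Toeplitz operator a_p = l_p + f_p(l_p^*), with
  f_p(l_p^*) = c_p(0) 1_p + sum_{n>=1} c_p(n) (l_p^*)^n\<close>
definition smf_toeplitz :: "(nat \<times> nat) set \<Rightarrow> (nat \<times> nat \<Rightarrow> real) \<Rightarrow> (nat \<times> nat \<Rightarrow> complex poly)
     \<Rightarrow> nat \<times> nat \<Rightarrow> vec \<Rightarrow> vec" where
  "smf_toeplitz J \<alpha> f p v = (\<lambda>w.
      smf_creation J \<alpha> p v w + coeff (f p) 0 * smf_unit J p v w
      + (\<Sum>n\<in>{1..degree (f p)}. coeff (f p) n * (((smf_annihilation J \<alpha> p) ^^ n) v) w))"

definition smf_A :: "(nat \<times> nat) set \<Rightarrow> (nat \<times> nat \<Rightarrow> real) \<Rightarrow> (nat \<times> nat \<Rightarrow> complex poly) \<Rightarrow> vec \<Rightarrow> vec" where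
  "smf_A J \<alpha> f v = (\<lambda>w. \<Sum>p\<in>J. smf_toeplitz J \<alpha> f p v w)"

definition smf_L :: "(nat \<times> nat) set \<Rightarrow> (nat \<times> nat \<Rightarrow> real) \<Rightarrow> vec \<Rightarrow> vec" where
  "smf_L J \<alpha> v = (\<lambda>w. \<Sum>p\<in>J. smf_creation J \<alpha> p v w)"

text \<open>rho(z) = (1 - zL)^{-1} Omega: the (unique) vector x of N-coordinates with
  (1 - zL) x = Omega.\<close>
definition smf_rho :: "(nat \<times> nat) set \<Rightarrow> (nat \<times> nat \<Rightarrow> real) \<Rightarrow> complex \<Rightarrow> vec" where
  "smf_rho J \<alpha> z = (THE x. (\<forall>w. \<not> smf_word J w \<longrightarrow> x w = 0) \<and>
       (\<forall>w. x w - z * smf_L J \<alpha> x w = vacuum w))"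

end

theory Submission imports Defs begin

text \<open>Every word of \<open>\<N>\<close> is admissible for the local rule: a letter \<open>(i,j)\<close> is followed
  by itself or, if \<open>i \<noteq> j\<close>, by a letter starting with \<open>j\<close>, and the last letter is diagonal.
  Since \<open>L\<close> creates exactly one letter, \<open>\<rho>(z)\<close> has coordinate \<open>z^|w| \<alpha>_w\<close> on every admissible
  word \<open>w\<close> (the formal geometric series).  Hence \<open>L\<rho> = (\<rho> - \<Omega>)/z\<close>, and \<open>\<ell>_p\<^sup>*\<close> acts on \<open>\<rho>\<close>
  as multiplication by \<open>\<alpha>_p\<^sup>2 z\<close> restricted to the words \<open>w\<close> with \<open>p w\<close> admissible.  With only
  two indices this set of words is exactly the range of \<open>1_p\<close>, so
  \<open>f_p(\<ell>_p\<^sup>*)\<rho> = f_p(\<alpha>_p\<^sup>2 z) 1_p \<rho>\<close>.\<close>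

fun block_word :: "nat list \<Rightarrow> nat list \<Rightarrow> word" where
  "block_word [i] [n] = replicate n (i,i)"
| "block_word (i#j#is) (n#ns) = replicate n (i,j) @ block_word (j#is) ns"
| "block_word _ _ = []"

fun valid_blocks :: "(nat \<times> nat) set \<Rightarrow> nat list \<Rightarrow> nat list \<Rightarrow> bool" where
  "valid_blocks J [i] [n] = (n \<ge> 1 \<and> (i,i) \<in> J)"
| "valid_blocks J (i#j#is) (n#ns) = (n \<ge> 1 \<and> i \<noteq> j \<and> (i,j) \<in> J \<and> valid_blocks J (j#is) ns)"
| "valid_blocks J _ _ = False"

lemma concat_replicate_eq_block_word:
  assumes "length ns = length is" and "is \<noteq> []"
  shows "concat (map (\<lambda>k. replicate (ns ! k)
           (if Suc k < length is then (is ! k, is ! Suc k) else (is ! k, is ! k))) [0..<length is])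
         = block_word is ns"
  using assms
proof (induction "is" arbitrary: ns)
  case Nil then show ?case by simp
next
  case (Cons i is')
  show ?case
  proof (cases is')
    case Nil then show ?thesis using Cons.prems by (cases ns) auto
  next
    case (Cons j is'')
    obtain n ns' where ns: "ns = n # ns'" using Cons.prems by (cases ns) auto
    have len: "length ns' = length is'" using Cons.prems ns by simp
    let ?F = "\<lambda>k. replicate (ns ! k) (if Suc k < length (i#is')
               then ((i#is') ! k, (i#is') ! Suc k) else ((i#is') ! k, (i#is') ! k))"
    let ?G = "\<lambda>k. replicate (ns' ! k) (if Suc k < length is'
               then (is' ! k, is' ! Suc k) else (is' ! k, is' ! k))"
    have "[0..<length (i#is')] = 0 # map Suc [0..<length is']"
      by (simp add: map_Suc_upt upt_conv_Cons del: upt_Suc)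
    moreover have "map ?F (map Suc [0..<length is']) = map ?G [0..<length is']"
      by (simp add: ns)
    ultimately have "map ?F [0..<length (i#is')] = ?F 0 # map ?G [0..<length is']"
      by (simp only: list.map)
    then show ?thesis using Cons.IH[OF len] Cons ns by (simp del: upt_Suc)
  qed
qed

lemma smf_word_conditions_iff_valid_blocks:
  assumes "length ns = length is" and "is \<noteq> []"
  shows "((\<forall>k<length is. ns ! k \<ge> 1) \<and> (\<forall>k. Suc k < length is \<longrightarrow> is ! k \<noteq> is ! Suc k) \<and>
          (\<forall>k. Suc k < length is \<longrightarrow> (is ! k, is ! Suc k) \<in> J) \<and>
          (is ! (length is - 1), is ! (length is - 1)) \<in> J)
         \<longleftrightarrow> valid_blocks J is ns"
  using assms
proof (induction "is" arbitrary: ns)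
  case Nil then show ?case by simp
next
  case (Cons i is')
  show ?case
  proof (cases is')
    case Nil then show ?thesis using Cons.prems by (cases ns) auto
  next
    case (Cons j is'')
    obtain n ns' where ns: "ns = n # ns'" using Cons.prems by (cases ns) auto
    have len: "length ns' = length is'" using Cons.prems ns by simp
    have "(\<forall>k<length (i#is'). ns ! k \<ge> 1) \<longleftrightarrow> n \<ge> 1 \<and> (\<forall>k<length is'. ns' ! k \<ge> 1)"
      using ns by (simp add: All_less_Suc2)
    moreover have "\<And>P. (\<forall>k. Suc k < length (i#is') \<longrightarrow> P k)
        \<longleftrightarrow> P 0 \<and> (\<forall>k. Suc k < length is' \<longrightarrow> P (Suc k))"
      using Cons by (auto simp: All_less_Suc2)
    ultimately show ?thesis using Cons.IH[OF len] Cons ns by (simp, blast)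
  qed
qed

lemma valid_blocks_lengths: "valid_blocks J is ns \<Longrightarrow> is \<noteq> [] \<and> length ns = length is"
  by (induction J "is" ns rule: valid_blocks.induct) auto

lemma smf_word_iff_block_word:
  "smf_word J w \<longleftrightarrow> w = [] \<or> (\<exists>is ns. valid_blocks J is ns \<and> w = block_word is ns)"
proof
  assume "smf_word J w"
  then show "w = [] \<or> (\<exists>is ns. valid_blocks J is ns \<and> w = block_word is ns)"
    unfolding smf_word_def
  proof (elim disjE exE conjE)
    fix m "is" ns
    assume "1 \<le> m" "length is = m" "length ns = m" "\<forall>k<m. 1 \<le> ns ! k"
      "\<forall>k. Suc k < m \<longrightarrow> is ! k \<noteq> is ! Suc k" "\<forall>k. Suc k < m \<longrightarrow> (is ! k, is ! Suc k) \<in> J"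
      "(is ! (m - 1), is ! (m - 1)) \<in> J"
      "w = concat (map (\<lambda>k. replicate (ns ! k)
             (if Suc k < m then (is ! k, is ! Suc k) else (is ! k, is ! k))) [0..<m])"
    moreover from this have "is \<noteq> []" by auto
    ultimately show ?thesis
      using smf_word_conditions_iff_valid_blocks[of ns "is" J]
        concat_replicate_eq_block_word[of ns "is"] by auto
  qed simp
next
  assume "w = [] \<or> (\<exists>is ns. valid_blocks J is ns \<and> w = block_word is ns)"
  then show "smf_word J w"
  proof (elim disjE exE conjE)
    fix "is" ns assume valid: "valid_blocks J is ns" and w: "w = block_word is ns"
    from valid_blocks_lengths[OF valid] have ne: "is \<noteq> []" and len: "length ns = length is"
      by auto
    show ?thesis unfolding smf_word_def
      using smf_word_conditions_iff_valid_blocks[OF len ne, of J]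
        concat_replicate_eq_block_word[OF len ne] valid w ne len
      by (intro disjI2 exI[of _ "length is"] exI[of _ "is"] exI[of _ ns]) (auto simp: Suc_le_eq)
  qed (simp add: smf_word_def)
qed

fun admissible :: "(nat \<times> nat) set \<Rightarrow> word \<Rightarrow> bool" where
  "admissible J [] = True"
| "admissible J [p] = (p \<in> J \<and> fst p = snd p)"
| "admissible J (p#q#w) =
     (p \<in> J \<and> (q = p \<or> (fst p \<noteq> snd p \<and> fst q = snd p)) \<and> admissible J (q#w))"

lemma admissible_replicate:
  "n \<ge> 1 \<Longrightarrow> p \<in> J \<Longrightarrow> fst p = snd p \<Longrightarrow> admissible J (replicate n p)"
proof (induction n)
  case (Suc n) then show ?case by (cases n) auto
qed simp

lemma admissible_replicate_append:
  "n \<ge> 1 \<Longrightarrow> p \<in> J \<Longrightarrow> fst p \<noteq> snd p \<Longrightarrow> v \<noteq> [] \<Longrightarrow> fst (hd v) = snd p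
   \<Longrightarrow> admissible J v \<Longrightarrow> admissible J (replicate n p @ v)"
proof (induction n)
  case (Suc n) then show ?case by (cases n; cases v) auto
qed simp

lemma admissible_block_word:
  "valid_blocks J is ns \<Longrightarrow>
     admissible J (block_word is ns) \<and> block_word is ns \<noteq> [] \<and> fst (hd (block_word is ns)) = hd is"
  by (induction J "is" ns rule: valid_blocks.induct)
     (auto intro: admissible_replicate admissible_replicate_append)

lemma valid_blocks_lengthen_first:
  "valid_blocks J is ns \<Longrightarrow> block_word is ns = q # w \<Longrightarrow>
   valid_blocks J is (Suc (hd ns) # tl ns) \<and> block_word is (Suc (hd ns) # tl ns) = q # q # w"
  by (induction J "is" ns rule: valid_blocks.induct) (auto dest!: Suc_le_D)

lemma block_word_of_admissible:
  "admissible J w \<Longrightarrow> w \<noteq> [] \<Longrightarrow> \<exists>is ns. valid_blocks J is ns \<and> w = block_word is ns"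
proof (induction w)
  case Nil then show ?case by simp
next
  case (Cons p w)
  show ?case
  proof (cases w)
    case Nil
    then have "valid_blocks J [fst p] [1] \<and> p # w = block_word [fst p] [1]"
      using Cons.prems by (cases p) auto
    then show ?thesis by blast
  next
    case (Cons q w')
    have adm: "admissible J w" and pJ: "p \<in> J" and step: "q = p \<or> (fst p \<noteq> snd p \<and> fst q = snd p)"
      using Cons.prems Cons by auto
    obtain "is" ns where valid: "valid_blocks J is ns" and w: "w = block_word is ns"
      using Cons.IH[OF adm] Cons by auto
    show ?thesis
    proof (cases "q = p")
      case True
      then show ?thesis using valid_blocks_lengthen_first[OF valid w[symmetric, unfolded Cons]] Cons
        by metis
    next
      case False
      with step have new_block: "fst p \<noteq> snd p" "fst q = snd p" by auto
      have "hd is = snd p" using admissible_block_word[OF valid] w Cons new_block by (metis list.sel(1))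
      then obtain is' where "is = snd p # is'" using valid_blocks_lengths[OF valid] by (cases "is") auto
      then have "valid_blocks J (fst p # is) (1 # ns) \<and> p # w = block_word (fst p # is) (1 # ns)"
        using valid w new_block pJ by (cases p) auto
      then show ?thesis by blast
    qed
  qed
qed

lemma smf_word_iff_admissible: "smf_word J w \<longleftrightarrow> admissible J w"
  using smf_word_iff_block_word admissible_block_word block_word_of_admissible
  by (metis admissible.simps(1))

lemma admissible_tl: "admissible J w \<Longrightarrow> admissible J (tl w)"
  by (induction J w rule: admissible.induct) auto

lemma admissible_Cons_in: "admissible J (p # w) \<Longrightarrow> p \<in> J"
  by (cases w) auto

lemma admissible_Cons_Cons_same: "admissible J (p # w) \<Longrightarrow> admissible J (p # p # w)"
  using admissible_Cons_in by auto

definition rho_coeff :: "(nat \<times> nat) set \<Rightarrow> (nat \<times> nat \<Rightarrow> real) \<Rightarrow> complex \<Rightarrow> vec" where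
  "rho_coeff J \<alpha> z w =
     (if admissible J w then z ^ length w * prod_list (map (\<lambda>p. complex_of_real (\<alpha> p)) w) else 0)"

lemma rho_coeff_Cons:
  "admissible J (p # w) \<Longrightarrow> rho_coeff J \<alpha> z (p # w) = z * complex_of_real (\<alpha> p) * rho_coeff J \<alpha> z w"
  using admissible_tl[of J "p # w"] by (simp add: rho_coeff_def)

lemma smf_L_apply:
  assumes "finite J"
  shows "smf_L J \<alpha> x w =
    (if w \<noteq> [] \<and> admissible J w then complex_of_real (\<alpha> (hd w)) * x (tl w) else 0)"
proof (cases "w \<noteq> [] \<and> admissible J w")
  case True
  then have "hd w \<in> J" using admissible_Cons_in by (cases w) auto
  moreover have creation: "(\<lambda>q. smf_creation J \<alpha> q x w) =
      (\<lambda>q. if hd w = q then complex_of_real (\<alpha> (hd w)) * x (tl w) else 0)"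
    using True by (auto simp: smf_creation_def smf_word_iff_admissible)
  ultimately show ?thesis unfolding smf_L_def creation using True assms by (simp add: sum.delta)
next
  case False then show ?thesis unfolding smf_L_def smf_creation_def smf_word_iff_admissible by auto
qed

lemma rho_coeff_solves:
  assumes "finite J"
  shows "rho_coeff J \<alpha> z w - z * smf_L J \<alpha> (rho_coeff J \<alpha> z) w = vacuum w"
proof (cases "w \<noteq> [] \<and> admissible J w")
  case True
  then obtain p w' where "w = p # w'" by (cases w) auto
  then show ?thesis using True by (simp add: smf_L_apply[OF assms] rho_coeff_Cons vacuum_def)
next
  case False
  then show ?thesis by (auto simp: smf_L_apply[OF assms] rho_coeff_def vacuum_def)
qed

lemma smf_rho_eq_rho_coeff:
  assumes fin: "finite J"
  shows "smf_rho J \<alpha> z = rho_coeff J \<alpha> z"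
  unfolding smf_rho_def
proof (rule the_equality)
  show "(\<forall>w. \<not> smf_word J w \<longrightarrow> rho_coeff J \<alpha> z w = 0) \<and>
        (\<forall>w. rho_coeff J \<alpha> z w - z * smf_L J \<alpha> (rho_coeff J \<alpha> z) w = vacuum w)"
    using rho_coeff_solves[OF fin] by (simp add: smf_word_iff_admissible rho_coeff_def)
next
  fix x assume x: "(\<forall>w. \<not> smf_word J w \<longrightarrow> x w = 0) \<and> (\<forall>w. x w - z * smf_L J \<alpha> x w = vacuum w)"
  have "x w = rho_coeff J \<alpha> z w" for w
  proof (induction w)
    case Nil then show ?case using x[THEN conjunct2, rule_format, of "[]"]
      by (simp add: smf_L_apply[OF fin] rho_coeff_def vacuum_def)
  next
    case (Cons p w)
    show ?case
    proof (cases "admissible J (p # w)")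
      case True
      have "x (p # w) = z * smf_L J \<alpha> x (p # w)"
        using x[THEN conjunct2, rule_format, of "p # w"] by (simp add: vacuum_def)
      then show ?thesis using True Cons.IH by (simp add: smf_L_apply[OF fin] rho_coeff_Cons)
    next
      case False then show ?thesis using x by (simp add: smf_word_iff_admissible rho_coeff_def)
    qed
  qed
  then show "x = rho_coeff J \<alpha> z" by auto
qed

text \<open>Only here is it used that there are at most two indices: for \<open>p = (i,k)\<close> with \<open>i \<noteq> k\<close>,
  a letter other than \<open>(i,i)\<close> either equals \<open>p\<close> or starts with \<open>k\<close>.\<close>

lemma smf_unit_apply:
  assumes J: "J \<subseteq> {i,k} \<times> {i,k}" and pJ: "p \<in> J"
  shows "smf_unit J p v w = (if admissible J (p # w) then v w else 0)"
proof (cases w)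
  case Nil then show ?thesis using pJ by (cases p) (auto simp: smf_unit_def smf_word_iff_admissible)
next
  case (Cons q w')
  show ?thesis
  proof (cases "admissible J w")
    case True
    then have "q \<in> J" using Cons admissible_Cons_in by auto
    then have "fst p \<in> {i,k}" "snd p \<in> {i,k}" "fst q \<in> {i,k}" "snd q \<in> {i,k}" using J pJ by auto
    then show ?thesis using True Cons pJ
      by (cases p; cases q) (auto simp: smf_unit_def smf_word_iff_admissible)
  next
    case False
    then have "\<not> admissible J (p # w)" using admissible_tl[of J "p # w"] by auto
    then show ?thesis using False by (simp add: smf_unit_def smf_word_iff_admissible)
  qed
qed

lemma smf_annihilation_apply:
  "smf_annihilation J \<alpha> p v w =
     (if admissible J (p # w) then complex_of_real (\<alpha> p) * v (p # w) else 0)"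
  using admissible_tl[of J "p # w"] by (auto simp: smf_annihilation_def smf_word_iff_admissible)

lemma smf_annihilation_power_rho_coeff:
  "(smf_annihilation J \<alpha> p ^^ Suc n) (rho_coeff J \<alpha> z) =
   (\<lambda>w. (complex_of_real ((\<alpha> p)^2) * z) ^ Suc n *
          (if admissible J (p # w) then rho_coeff J \<alpha> z w else 0))"
proof (induction n)
  case 0 show ?case
    by (rule ext) (simp add: smf_annihilation_apply rho_coeff_Cons power2_eq_square)
next
  case (Suc n)
  show ?case
    by (rule ext, subst funpow.simps(2), subst comp_apply, subst Suc.IH)
       (auto simp: smf_annihilation_apply rho_coeff_Cons admissible_Cons_Cons_same power2_eq_square
             dest: admissible_Cons_in)
qed

lemma poly_eq_coeff_0_plus_sum:
  "poly q (x :: 'a :: comm_semiring_1) = coeff q 0 + (\<Sum>n\<in>{1..degree q}. coeff q n * x ^ n)"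
proof -
  have split_0: "{..degree q} = insert 0 {1..degree q}" by auto
  show ?thesis unfolding poly_altdef split_0 by (subst sum.insert) auto
qed

lemma smf_toeplitz_rho_coeff:
  assumes J: "J \<subseteq> {i,k} \<times> {i,k}" and pJ: "p \<in> J"
  shows "smf_toeplitz J \<alpha> f p (rho_coeff J \<alpha> z) w = smf_creation J \<alpha> p (rho_coeff J \<alpha> z) w
     + poly (f p) (complex_of_real ((\<alpha> p)^2) * z) * smf_unit J p (rho_coeff J \<alpha> z) w"
proof -
  let ?c = "complex_of_real ((\<alpha> p)^2) * z"
  let ?U = "smf_unit J p (rho_coeff J \<alpha> z) w"
  have pointwise: "coeff (f p) n * ((smf_annihilation J \<alpha> p ^^ n) (rho_coeff J \<alpha> z)) w
        = coeff (f p) n * ?c ^ n * ?U" if n_pos: "n \<in> {1..degree (f p)}" for n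
  proof -
    obtain m where "n = Suc m" using n_pos by (cases n) auto
    then show ?thesis by (simp only: smf_annihilation_power_rho_coeff smf_unit_apply[OF J pJ]) simp
  qed
  then have "(\<Sum>n\<in>{1..degree (f p)}. coeff (f p) n * ((smf_annihilation J \<alpha> p ^^ n) (rho_coeff J \<alpha> z)) w)
      = (\<Sum>n\<in>{1..degree (f p)}. coeff (f p) n * ?c ^ n * ?U)"
    by (rule sum.cong[OF refl])
  then show ?thesis unfolding smf_toeplitz_def poly_eq_coeff_0_plus_sum
    by (simp add: algebra_simps sum_distrib_left sum_distrib_right)
qed

theorem lemma4p1:
  fixes J :: "(nat \<times> nat) set" and \<alpha> :: "nat \<times> nat \<Rightarrow> real"
    and f :: "nat \<times> nat \<Rightarrow> complex poly" and z :: complex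
  assumes "J \<subseteq> {1,2} \<times> {1,2}"
    and "\<forall>p\<in>J. \<alpha> p > 0"
    and "0 < cmod z"
    and "cmod z < 1 / (\<Sum>p\<in>J. \<bar>\<alpha> p\<bar>^2)"
  shows "smf_A J \<alpha> f (smf_rho J \<alpha> z) =
    (\<lambda>w. (smf_rho J \<alpha> z w - vacuum w) / z
       + (\<Sum>p\<in>J. poly (f p) (complex_of_real ((\<alpha> p)^2) * z) * smf_unit J p (smf_rho J \<alpha> z) w))"
proof (rule ext)
  fix w
  have fin: "finite J" using assms(1) finite_subset by blast
  let ?\<rho> = "rho_coeff J \<alpha> z"
  have "smf_A J \<alpha> f ?\<rho> w = smf_L J \<alpha> ?\<rho> w
      + (\<Sum>p\<in>J. poly (f p) (complex_of_real ((\<alpha> p)^2) * z) * smf_unit J p ?\<rho> w)"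
    unfolding smf_A_def smf_L_def using smf_toeplitz_rho_coeff[OF assms(1)] by (simp add: sum.distrib)
  moreover have "smf_L J \<alpha> ?\<rho> w = (?\<rho> w - vacuum w) / z"
    using rho_coeff_solves[OF fin, of \<alpha> z w] assms(3) by (auto simp: field_simps)
  ultimately show "smf_A J \<alpha> f (smf_rho J \<alpha> z) w = (smf_rho J \<alpha> z w - vacuum w) / z
      + (\<Sum>p\<in>J. poly (f p) (complex_of_real ((\<alpha> p)^2) * z) * smf_unit J p (smf_rho J \<alpha> z) w)"
    by (simp add: smf_rho_eq_rho_coeff[OF fin])
qed

end
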